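(* Let $n,m$ be positive integers. For a weak composition $A=(a_0,b_1,a_1,\ldots,b_m,a_m)$ of $n$ into $2m+1$ parts, let $P_A$ be the poset on $[n]$ that is the disjoint union of $2m+1$ chains on consecutive blocks of sizes $a_0,b_1,a_1,\ldots,b_m,a_m$, where the blocks of sizes $a_j$ are ordered increasingly ($s<_{P_A}s+1<_{P_A}\cdots$) and the blocks of sizes $b_j$ are ordered decreasingly (e.g. the second block is the chain $a_0+b_1<_{P_A}a_0+b_1-1<_{P_A}\cdots<_{P_A}a_0+1$). An outcome of an up-down $m$-riffle shuffle is a pair $(A,\sigma)$ with $A$ such a weak composition and $\sigma\in\mathcal{L}(P_A)$. Then the map sending $(A,\sigma)$ to the unique $f\in\mathcal{A}(P_A;m)$ whose image multiset is $\{0^{a_0},\bar1^{b_1},1^{a_1},\ldots,\bar m^{b_m},m^{a_m}\}$ and whose sorting permutation is $\pi(f)=\sigma^{-1}$ is a well-defined bijection from the set of outcomes of the up-down $m$-riffle shuffle onto $\mathcal{A}([n];m)$.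
   Context: Integers are written with $\bar i=-i$, totally ordered by $0<_{\mathbb Z}\bar1<_{\mathbb Z}1<_{\mathbb Z}\bar2<_{\mathbb Z}2<_{\mathbb Z}\cdots$, and $|\bar j|=j$. Write $a\prec_+ b$ if $a<_{\mathbb Z}b$ or $a=b\in\{0,1,2,\ldots\}$, and $a\prec_- b$ if $a<_{\mathbb Z}b$ or $a=b\in\{\bar1,\bar2,\ldots\}$. For a partial order $P$ on $[n]$, a $P$-partition is a map $f:[n]\to\mathbb Z$ such that whenever $i<_P j$: $f(i)\prec_+f(j)$ if $i<j$ as integers, and $f(i)\prec_- f(j)$ if $i>j$. $\mathcal{A}(P;m)$ is the set of $P$-partitions with $|f(i)|\le m$ for all $i$; the antichain $[n]$ has no relations. A permutation $\pi\in S_n$ is identified with the chain $\pi(1)<_\pi\cdots<_\pi\pi(n)$, and $\mathcal{L}(P)=\{\pi\in S_n: i<_Pj\Rightarrow i<_\pi j\}$. The sorting permutation $\pi(f)$ of $f:[n]\to\mathbb Z$ is the unique permutation with: $f(i)<_{\mathbb Z}f(j)\Rightarrow i<_\pi j$; $i<j$, $f(i)=f(j)\in\{0,1,\ldots\}\Rightarrow i<_\pi j$; $i<j$, $f(i)=f(j)\in\{\bar1,\bar2,\ldots\}\Rightarrow j<_\pi i$. (In the up-down riffle shuffle, the deck $1,\ldots,n$ is cut into $2m+1$ consecutive piles of sizes $A$, every other pile starting with the second is reversed, and the piles are interleaved; the linear extension $\sigma$ records the interleaving.)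
   Formalization: The image of an outcome $(A,\sigma)$ is the unique f in $\mathcal{A}([n];m)$, instead of $\mathcal{A}(P_A;m)$, with the given image multiset and sorting permutation $\pi(f)=\sigma^{-1}$. The statement above fails without it. *)

theory Defs
  imports Main "HOL-Library.Multiset" "HOL-Library.FuncSet" "HOL-Combinatorics.Permutations"
begin

text \<open>The order 0 < -1 < 1 < -2 < 2 < ... on the integers, via a rank function.\<close>
definition zkey :: "int \<Rightarrow> nat" where
  "zkey x = (if x \<ge> 0 then 2 * nat x else 2 * nat (- x) - 1)"

definition zless :: "int \<Rightarrow> int \<Rightarrow> bool" where
  "zless a b \<longleftrightarrow> zkey a < zkey b"

definition prec_plus :: "int \<Rightarrow> int \<Rightarrow> bool" where
  "prec_plus a b \<longleftrightarrow> zless a b \<or> (a = b \<and> a \<ge> 0)"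

definition prec_minus :: "int \<Rightarrow> int \<Rightarrow> bool" where
  "prec_minus a b \<longleftrightarrow> zless a b \<or> (a = b \<and> a < 0)"

text \<open>A poset on [n] is given by its strict order relation P (P i j means i <_P j).\<close>
definition is_P_partition :: "nat \<Rightarrow> (nat \<Rightarrow> nat \<Rightarrow> bool) \<Rightarrow> (nat \<Rightarrow> int) \<Rightarrow> bool" where
  "is_P_partition n P f \<longleftrightarrow>
     (\<forall>i\<in>{1..n}. \<forall>j\<in>{1..n}. P i j \<longrightarrow>
        (if i < j then prec_plus (f i) (f j) else prec_minus (f i) (f j)))"

definition PP_set :: "nat \<Rightarrow> (nat \<Rightarrow> nat \<Rightarrow> bool) \<Rightarrow> nat \<Rightarrow> (nat \<Rightarrow> int) set" where
  "PP_set n P m = {f \<in> {1..n} \<rightarrow>\<^sub>E (UNIV :: int set).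
      is_P_partition n P f \<and> (\<forall>i\<in>{1..n}. \<bar>f i\<bar> \<le> int m)}"

definition antichain :: "nat \<Rightarrow> nat \<Rightarrow> bool" where
  "antichain i j \<longleftrightarrow> False"

text \<open>A permutation pi is the chain pi(1) < pi(2) < ... < pi(n).\<close>
definition chain_less :: "(nat \<Rightarrow> nat) \<Rightarrow> nat \<Rightarrow> nat \<Rightarrow> bool" where
  "chain_less \<pi> i j \<longleftrightarrow> inv \<pi> i < inv \<pi> j"

definition lin_ext :: "nat \<Rightarrow> (nat \<Rightarrow> nat \<Rightarrow> bool) \<Rightarrow> (nat \<Rightarrow> nat) set" where
  "lin_ext n P = {\<pi>. \<pi> permutes {1..n} \<and>
      (\<forall>i\<in>{1..n}. \<forall>j\<in>{1..n}. P i j \<longrightarrow> chain_less \<pi> i j)}"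

definition is_sorting_perm :: "nat \<Rightarrow> (nat \<Rightarrow> int) \<Rightarrow> (nat \<Rightarrow> nat) \<Rightarrow> bool" where
  "is_sorting_perm n f \<pi> \<longleftrightarrow> \<pi> permutes {1..n} \<and>
     (\<forall>i\<in>{1..n}. \<forall>j\<in>{1..n}.
        (zless (f i) (f j) \<longrightarrow> chain_less \<pi> i j) \<and>
        (i < j \<and> f i = f j \<and> f i \<ge> 0 \<longrightarrow> chain_less \<pi> i j) \<and>
        (i < j \<and> f i = f j \<and> f i < 0 \<longrightarrow> chain_less \<pi> j i))"

definition sorting_perm :: "nat \<Rightarrow> (nat \<Rightarrow> int) \<Rightarrow> (nat \<Rightarrow> nat)" where
  "sorting_perm n f = (THE \<pi>. is_sorting_perm n f \<pi>)"

text \<open>Weak compositions A = (a_0, b_1, a_1, ..., b_m, a_m) of n into 2m+1 parts, as lists: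
  A!0 = a_0, A!(2j-1) = b_j, A!(2j) = a_j.\<close>
definition wcomps :: "nat \<Rightarrow> nat \<Rightarrow> nat list set" where
  "wcomps n m = {A. length A = 2 * m + 1 \<and> sum_list A = n}"

definition in_block :: "nat list \<Rightarrow> nat \<Rightarrow> nat \<Rightarrow> bool" where
  "in_block A k i \<longleftrightarrow> sum_list (take k A) < i \<and> i \<le> sum_list (take (Suc k) A)"

definition P_A :: "nat list \<Rightarrow> nat \<Rightarrow> nat \<Rightarrow> bool" where
  "P_A A i j \<longleftrightarrow> (\<exists>k < length A. in_block A k i \<and> in_block A k j \<and>
                      (if even k then i < j else j < i))"

definition block_val :: "nat \<Rightarrow> int" where
  "block_val k = (if even k then int (k div 2) else - int ((k + 1) div 2))"

definition target_mset :: "nat list \<Rightarrow> int multiset" where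
  "target_mset A = (\<Sum>k<length A. replicate_mset (A ! k) (block_val k))"

definition updown_outcomes :: "nat \<Rightarrow> nat \<Rightarrow> (nat list \<times> (nat \<Rightarrow> nat)) set" where
  "updown_outcomes n m = {(A, \<sigma>). A \<in> wcomps n m \<and> \<sigma> \<in> lin_ext n (P_A A)}"

definition image_of_outcome :: "nat \<Rightarrow> nat \<Rightarrow> nat list \<Rightarrow> (nat \<Rightarrow> nat) \<Rightarrow> (nat \<Rightarrow> int) \<Rightarrow> bool" where
  "image_of_outcome n m A \<sigma> f \<longleftrightarrow>
     f \<in> PP_set n antichain m \<and>
     image_mset f (mset_set {1..n}) = target_mset A \<and>
     sorting_perm n f = inv \<sigma>"

definition updown_map :: "nat \<Rightarrow> nat \<Rightarrow> nat list \<times> (nat \<Rightarrow> nat) \<Rightarrow> (nat \<Rightarrow> int)" where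
  "updown_map n m = (\<lambda>(A, \<sigma>). THE f. image_of_outcome n m A \<sigma> f)"

end

theory Submission
  imports Defs
begin

text \<open>Ranking \<open>1..n\<close> by the order "value under \<open>0 < -1 < 1 < -2 < 2 < \<dots>\<close>, ties broken
  increasingly for nonnegative and decreasingly for negative values" gives the inverse \<open>\<sigma>\<close> of the
  sorting permutation of \<open>f\<close>, and counting the values gives the composition \<open>A\<close>. The rank
  permutation sends the level set of the \<open>k\<close>-th value onto the \<open>k\<close>-th block of positions,
  increasingly or decreasingly according to the sign, so it is a linear extension of \<open>P\<^sub>A\<close>.
  Conversely \<open>(A, \<sigma>)\<close> determines \<open>f\<close>: \<open>f x\<close> is the value attached to the block containing
  \<open>\<sigma> x\<close>.\<close>

lemma zkey_block_val [simp]: "zkey (block_val k) = k"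
  unfolding zkey_def block_val_def by (cases "even k") (auto elim!: evenE oddE)

lemma block_val_zkey [simp]: "block_val (zkey v) = v"
  unfolding zkey_def block_val_def by (cases "v \<ge> 0"; simp; presburger)

lemma zkey_eq_iff: "zkey a = zkey b \<longleftrightarrow> a = b"
  by (metis block_val_zkey)

lemma even_zkey_iff: "even (zkey v) \<longleftrightarrow> v \<ge> 0"
  unfolding zkey_def by (cases "v \<ge> 0"; simp; presburger)

lemma zkey_less_iff_abs_le: "zkey v < 2 * m + 1 \<longleftrightarrow> \<bar>v\<bar> \<le> int m"
  unfolding zkey_def by (cases "v \<ge> 0"; simp; linarith)

lemma card_Collect_permutes:
  assumes "\<sigma> permutes S"
  shows "card {x \<in> S. P (\<sigma> x)} = card {x \<in> S. P x}"
proof -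
  have "{x \<in> S. P (\<sigma> x)} = \<sigma> -` {x \<in> S. P x}"
    using permutes_in_image[OF assms] by auto
  also have "card \<dots> = card {x \<in> S. P x}"
    by (rule card_vimage_inj) (use permutes_bij[OF assms] in \<open>simp_all add: bij_is_inj bij_is_surj\<close>)
  finally show ?thesis .
qed

lemma card_less_permutes:
  assumes "\<tau> permutes {1..n}" "x \<in> {1..n}"
  shows "card {y \<in> {1..n}. \<tau> y < \<tau> x} = \<tau> x - 1"
proof -
  have "card {y \<in> {1..n}. \<tau> y < \<tau> x} = card {p \<in> {1..n}. p < \<tau> x}"
    by (rule card_Collect_permutes[OF assms(1)])
  also have "{p \<in> {1..n}. p < \<tau> x} = {1..<\<tau> x}"
    using permutes_in_image[OF assms(1), of x] assms(2) by auto
  finally show ?thesis by simp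
qed

definition rank_perm :: "(nat \<Rightarrow> 'a::linorder) \<Rightarrow> nat \<Rightarrow> nat \<Rightarrow> nat" where
  "rank_perm g n x = (if x \<in> {1..n} then card {y \<in> {1..n}. g y < g x} + 1 else x)"

lemma rank_perm_strict_mono:
  assumes "x \<in> {1..n}" "y \<in> {1..n}" "g x < g y"
  shows "rank_perm g n x < rank_perm g n y"
proof -
  have "{z \<in> {1..n}. g z < g x} \<subseteq> {z \<in> {1..n}. g z < g y}"
    using assms(3) by (blast intro: less_trans)
  moreover have "x \<in> {z \<in> {1..n}. g z < g y} - {z \<in> {1..n}. g z < g x}"
    using assms by simp
  ultimately have "{z \<in> {1..n}. g z < g x} \<subset> {z \<in> {1..n}. g z < g y}"
    by blast
  then have "card {z \<in> {1..n}. g z < g x} < card {z \<in> {1..n}. g z < g y}"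
    by (intro psubset_card_mono) auto
  then show ?thesis
    using assms unfolding rank_perm_def by simp
qed

lemma rank_perm_less_iff:
  assumes "inj_on g {1..n}" "x \<in> {1..n}" "y \<in> {1..n}"
  shows "rank_perm g n x < rank_perm g n y \<longleftrightarrow> g x < g y"
proof
  assume less: "rank_perm g n x < rank_perm g n y"
  show "g x < g y"
  proof (rule ccontr)
    assume "\<not> g x < g y"
    moreover have "g x \<noteq> g y"
      using less inj_onD[OF assms(1) _ assms(2,3)] by auto
    ultimately have "g y < g x"
      by (simp add: not_less less_le)
    then show False
      using rank_perm_strict_mono[OF assms(3,2), of g] less by simp
  qed
qed (rule rank_perm_strict_mono[OF assms(2,3)])

lemma rank_perm_permutes:
  assumes "inj_on g {1..n}"
  shows "rank_perm g n permutes {1..n}"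
proof (rule bij_imp_permutes)
  have "rank_perm g n ` {1..n} \<subseteq> {1..n}"
  proof (rule image_subsetI)
    fix x assume "x \<in> {1..n}"
    have "card {y \<in> {1..n}. g y < g x} \<le> card ({1..n} - {x})"
      by (intro card_mono) auto
    then have "card {y \<in> {1..n}. g y < g x} < n"
      using \<open>x \<in> {1..n}\<close> by (simp, linarith)
    then show "rank_perm g n x \<in> {1..n}"
      using \<open>x \<in> {1..n}\<close> unfolding rank_perm_def by simp
  qed
  moreover have "inj_on (rank_perm g n) {1..n}"
  proof (rule linorder_inj_onI')
    fix x y assume "x \<in> {1..n}" "y \<in> {1..n}" "x < y"
    then have "g x \<noteq> g y"
      using inj_onD[OF assms] by fastforce
    then have "g x < g y \<or> g y < g x"
      by (rule neq_iff[THEN iffD1])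
    then show "rank_perm g n x \<noteq> rank_perm g n y"
      using rank_perm_strict_mono[of x n y g] rank_perm_strict_mono[of y n x g]
        \<open>x \<in> {1..n}\<close> \<open>y \<in> {1..n}\<close> by auto
  qed
  ultimately show "bij_betw (rank_perm g n) {1..n} {1..n}"
    unfolding bij_betw_def using endo_inj_surj[OF finite_atLeastAtMost] by blast
qed (auto simp: rank_perm_def)

lemma rank_perm_unique:
  assumes "inj_on g {1..n}" "\<tau> permutes {1..n}"
    and mono: "\<And>i j. i \<in> {1..n} \<Longrightarrow> j \<in> {1..n} \<Longrightarrow> g i < g j \<Longrightarrow> \<tau> i < \<tau> j"
  shows "\<tau> = rank_perm g n"
proof
  fix x
  show "\<tau> x = rank_perm g n x"
  proof (cases "x \<in> {1..n}")
    case False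
    then show ?thesis
      using permutes_not_in[OF assms(2)] unfolding rank_perm_def by auto
  next
    case True
    have "\<tau> y < \<tau> x \<longleftrightarrow> g y < g x" if "y \<in> {1..n}" for y
      using mono[OF that True] mono[OF True that] inj_onD[OF assms(1) _ that True]
      by (cases "g y" "g x" rule: linorder_cases) auto
    then have "{y \<in> {1..n}. \<tau> y < \<tau> x} = {y \<in> {1..n}. g y < g x}"
      by blast
    moreover have "\<tau> x \<ge> 1"
      using True permutes_in_image[OF assms(2)] by auto
    ultimately show ?thesis
      using card_less_permutes[OF assms(2) True] True unfolding rank_perm_def by simp
  qed
qed

definition sort_less :: "(nat \<Rightarrow> int) \<Rightarrow> nat \<Rightarrow> nat \<Rightarrow> bool" where
  "sort_less f i j \<longleftrightarrow> zless (f i) (f j) \<or> (f i = f j \<and> f i \<ge> 0 \<and> i < j) \<or> (f i = f j \<and> f i < 0 \<and> j < i)"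

text \<open>Positions in \<open>{1..n}\<close> and their reversals \<open>n - x\<close> are at most \<open>n\<close>, so the factor
  \<open>n + 1\<close> makes the key compare values first and positions only on ties.\<close>
definition sort_key :: "nat \<Rightarrow> (nat \<Rightarrow> int) \<Rightarrow> nat \<Rightarrow> nat" where
  "sort_key n f x = zkey (f x) * (n + 1) + (if f x \<ge> 0 then x else n - x)"

abbreviation sort_rank :: "nat \<Rightarrow> (nat \<Rightarrow> int) \<Rightarrow> nat \<Rightarrow> nat" where
  "sort_rank n f \<equiv> rank_perm (sort_key n f) n"

lemma mult_add_less_mult_add_iff:
  fixes a b r s N :: nat
  assumes "r \<le> N" "s \<le> N"
  shows "a * (N + 1) + r < b * (N + 1) + s \<longleftrightarrow> a < b \<or> (a = b \<and> r < s)"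
proof -
  have "a * (N + 1) + r < b * (N + 1) + s" if "a < b" "r \<le> N" for a b r s :: nat
  proof -
    have "Suc a * (N + 1) \<le> b * (N + 1)"
      using that by (intro mult_le_mono1) simp
    then show ?thesis
      using that unfolding mult_Suc by linarith
  qed
  then show ?thesis
    using assms by (metis add_less_cancel_left linorder_neqE_nat not_less_iff_gr_or_eq)
qed

lemma sort_key_less_iff:
  assumes "i \<in> {1..n}" "j \<in> {1..n}"
  shows "sort_key n f i < sort_key n f j \<longleftrightarrow> sort_less f i j"
proof -
  have offset: "(if f x \<ge> 0 then x else n - x) \<le> n" if "x \<in> {1..n}" for x
    using that by auto
  have "sort_key n f i < sort_key n f j \<longleftrightarrow> zkey (f i) < zkey (f j) \<or> (zkey (f i) = zkey (f j) \<and>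
      (if f i \<ge> 0 then i else n - i) < (if f j \<ge> 0 then j else n - j))"
    unfolding sort_key_def by (rule mult_add_less_mult_add_iff[OF offset[OF assms(1)] offset[OF assms(2)]])
  also have "\<dots> \<longleftrightarrow> sort_less f i j"
    using assms unfolding sort_less_def zless_def zkey_eq_iff by auto
  finally show ?thesis .
qed

lemma inj_on_sort_key: "inj_on (sort_key n f) {1..n}"
proof (rule inj_onI)
  fix x y assume "x \<in> {1..n}" "y \<in> {1..n}" "sort_key n f x = sort_key n f y"
  then have "\<not> sort_less f x y" "\<not> sort_less f y x"
    using sort_key_less_iff by (metis less_irrefl)+
  then show "x = y"
    using zkey_eq_iff[of "f x" "f y"] unfolding sort_less_def zless_def by (cases x y rule: linorder_cases) auto
qed

lemma sort_rank_permutes: "sort_rank n f permutes {1..n}"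
  by (rule rank_perm_permutes[OF inj_on_sort_key])

lemma sort_rank_less_iff:
  assumes "i \<in> {1..n}" "j \<in> {1..n}"
  shows "sort_rank n f i < sort_rank n f j \<longleftrightarrow> sort_less f i j"
  using rank_perm_less_iff[OF inj_on_sort_key assms] sort_key_less_iff[OF assms] by simp

lemma is_sorting_perm_iff:
  "is_sorting_perm n f \<pi> \<longleftrightarrow>
     \<pi> permutes {1..n} \<and> (\<forall>i\<in>{1..n}. \<forall>j\<in>{1..n}. sort_less f i j \<longrightarrow> chain_less \<pi> i j)"
  (is "_ \<longleftrightarrow> _ \<and> ?mono")
proof
  assume sorting: "is_sorting_perm n f \<pi>"
  have "chain_less \<pi> i j" if "i \<in> {1..n}" "j \<in> {1..n}" "sort_less f i j" for i j
  proof -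
    have "zless (f i) (f j) \<longrightarrow> chain_less \<pi> i j" "i < j \<and> f i = f j \<and> f i \<ge> 0 \<longrightarrow> chain_less \<pi> i j"
      "j < i \<and> f j = f i \<and> f j < 0 \<longrightarrow> chain_less \<pi> i j"
      using sorting that(1,2) unfolding is_sorting_perm_def by blast+
    then show ?thesis
      using that(3) unfolding sort_less_def by auto
  qed
  then show "\<pi> permutes {1..n} \<and> ?mono"
    using sorting unfolding is_sorting_perm_def by blast
next
  assume "\<pi> permutes {1..n} \<and> ?mono"
  then show "is_sorting_perm n f \<pi>"
    unfolding is_sorting_perm_def by (auto simp: sort_less_def)
qed

lemma sorting_perm_eq: "sorting_perm n f = inv (sort_rank n f)"
  unfolding sorting_perm_def
proof (rule the_equality)
  show "is_sorting_perm n f (inv (sort_rank n f))"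
    unfolding is_sorting_perm_iff chain_less_def permutes_inv_inv[OF sort_rank_permutes]
    using permutes_inv[OF sort_rank_permutes] sort_rank_less_iff by blast
next
  fix \<pi> assume "is_sorting_perm n f \<pi>"
  then have \<pi>: "\<pi> permutes {1..n}" "\<And>i j. i \<in> {1..n} \<Longrightarrow> j \<in> {1..n} \<Longrightarrow> sort_less f i j \<Longrightarrow> inv \<pi> i < inv \<pi> j"
    unfolding is_sorting_perm_iff chain_less_def by auto
  have "inv \<pi> = sort_rank n f"
    using \<pi> sort_key_less_iff by (intro rank_perm_unique[OF inj_on_sort_key permutes_inv]) auto
  then show "\<pi> = inv (sort_rank n f)"
    using permutes_inv_inv[OF \<pi>(1)] by metis
qed

lemma sorting_perm_eq_inv_iff:
  assumes "\<sigma> permutes {1..n}"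
  shows "sorting_perm n f = inv \<sigma> \<longleftrightarrow> \<sigma> = sort_rank n f"
  unfolding sorting_perm_eq
  by (metis permutes_inv_inv[OF assms] permutes_inv_inv[OF sort_rank_permutes])

abbreviation prefix_sum :: "nat list \<Rightarrow> nat \<Rightarrow> nat" where
  "prefix_sum A k \<equiv> sum_list (take k A)"

lemma prefix_sum_mono: "k \<le> l \<Longrightarrow> prefix_sum A k \<le> prefix_sum A l"
  by (metis le_add_diff_inverse sum_list_append take_add le_add1)

lemma prefix_sum_Suc: "k < length A \<Longrightarrow> prefix_sum A (Suc k) = prefix_sum A k + A ! k"
  by (simp add: take_Suc_conv_app_nth)

lemma in_block_less:
  assumes "in_block A k p" "in_block A l q" "k < l"
  shows "p < q"
  using assms prefix_sum_mono[of "Suc k" l A] unfolding in_block_def by simp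

lemma in_block_unique:
  assumes "in_block A k p" "in_block A l p"
  shows "k = l"
  using in_block_less[OF assms] in_block_less[OF assms(2,1)] by (metis less_irrefl linorder_neqE_nat)

lemma ex_in_block:
  assumes "1 \<le> p" "p \<le> sum_list A"
  shows "\<exists>k < length A. in_block A k p"
proof -
  define k where "k = (LEAST k. p \<le> prefix_sum A (Suc k))"
  have last: "p \<le> prefix_sum A (Suc (length A - 1))"
    using assms(2) by simp
  have "p \<le> prefix_sum A (Suc k)"
    unfolding k_def by (rule LeastI[where P = "\<lambda>k. p \<le> prefix_sum A (Suc k)", OF last])
  moreover have "k \<le> length A - 1"
    unfolding k_def by (rule Least_le[where P = "\<lambda>k. p \<le> prefix_sum A (Suc k)", OF last])
  moreover have "prefix_sum A k < p"
  proof (cases k)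
    case (Suc l)
    then have "\<not> p \<le> prefix_sum A (Suc l)"
      unfolding k_def by (metis lessI not_less_Least)
    then show ?thesis
      using Suc by simp
  qed (use assms(1) in simp)
  moreover have "A \<noteq> []"
    using assms by auto
  ultimately show ?thesis
    unfolding in_block_def by (metis One_nat_def Suc_pred le_imp_less_Suc length_greater_0_conv)
qed

definition block_of :: "nat list \<Rightarrow> nat \<Rightarrow> nat" where
  "block_of A p = (THE k. k < length A \<and> in_block A k p)"

lemma block_of_eq: "k < length A \<Longrightarrow> in_block A k p \<Longrightarrow> block_of A p = k"
  unfolding block_of_def by (rule the_equality) (auto intro: in_block_unique)

lemma block_of_in_block:
  assumes "1 \<le> p" "p \<le> sum_list A"
  shows "block_of A p < length A" "in_block A (block_of A p) p"
  using ex_in_block[OF assms] block_of_eq by metis+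

lemma card_in_block:
  assumes "k < length A"
  shows "card {p \<in> {1..sum_list A}. in_block A k p} = A ! k"
proof -
  have "prefix_sum A (Suc k) \<le> prefix_sum A (length A)"
    using assms by (intro prefix_sum_mono) simp
  then have "{p \<in> {1..sum_list A}. in_block A k p} = {prefix_sum A k + 1 .. prefix_sum A (Suc k)}"
    unfolding in_block_def by auto
  then show ?thesis
    using prefix_sum_Suc[OF assms] by simp
qed

lemma count_target_mset:
  "count (target_mset A) v = (if zkey v < length A then A ! zkey v else 0)"
proof -
  have "count (target_mset A) v = (\<Sum>k<length A. if zkey v = k then A ! k else 0)"
    unfolding target_mset_def count_sum
    by (intro sum.cong) (auto simp flip: zkey_eq_iff)
  then show ?thesis
    by simp
qed

lemma target_mset_eq_iff:
  assumes "length A = length B"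
  shows "target_mset A = target_mset B \<longleftrightarrow> A = B"
proof
  assume eq: "target_mset A = target_mset B"
  show "A = B"
  proof (rule nth_equalityI[OF assms])
    fix k assume "k < length A"
    then show "A ! k = B ! k"
      using arg_cong[OF eq, of "\<lambda>M. count M (block_val k)"] assms
      by (simp add: count_target_mset)
  qed
qed simp

definition block_sizes :: "nat \<Rightarrow> nat \<Rightarrow> (nat \<Rightarrow> int) \<Rightarrow> nat list" where
  "block_sizes n m f = map (\<lambda>k. card {x \<in> {1..n}. zkey (f x) = k}) [0..<2 * m + 1]"

lemma length_block_sizes [simp]: "length (block_sizes n m f) = 2 * m + 1"
  by (simp add: block_sizes_def)

lemma nth_block_sizes: "k < 2 * m + 1 \<Longrightarrow> block_sizes n m f ! k = card {x \<in> {1..n}. zkey (f x) = k}"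
  unfolding block_sizes_def by (simp del: upt_Suc)

lemma prefix_sum_block_sizes:
  "k \<le> 2 * m + 1 \<Longrightarrow> prefix_sum (block_sizes n m f) k = card {x \<in> {1..n}. zkey (f x) < k}"
proof (induction k)
  case (Suc k)
  have "{x \<in> {1..n}. zkey (f x) < Suc k} = {x \<in> {1..n}. zkey (f x) < k} \<union> {x \<in> {1..n}. zkey (f x) = k}"
    by auto
  then have "card {x \<in> {1..n}. zkey (f x) < Suc k}
      = card {x \<in> {1..n}. zkey (f x) < k} + card {x \<in> {1..n}. zkey (f x) = k}"
    by (simp add: card_Un_disjoint disjoint_iff)
  then show ?case
    using Suc prefix_sum_Suc[of k "block_sizes n m f"] nth_block_sizes[of k m n f] by simp
qed simp

lemma sum_list_block_sizes:
  assumes "\<forall>x\<in>{1..n}. \<bar>f x\<bar> \<le> int m"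
  shows "sum_list (block_sizes n m f) = n"
proof -
  have "{x \<in> {1..n}. zkey (f x) < 2 * m + 1} = {1..n}"
    using assms zkey_less_iff_abs_le by blast
  then show ?thesis
    using prefix_sum_block_sizes[of "2 * m + 1" m n f] by simp
qed

lemma target_mset_block_sizes:
  assumes "\<forall>x\<in>{1..n}. \<bar>f x\<bar> \<le> int m"
  shows "target_mset (block_sizes n m f) = image_mset f (mset_set {1..n})"
proof (rule multiset_eqI)
  fix v
  have bound: "zkey (f x) < 2 * m + 1" if "x \<in> {1..n}" for x
    using assms that zkey_less_iff_abs_le by blast
  have "count (image_mset f (mset_set {1..n})) v = card {x \<in> {1..n}. zkey (f x) = zkey v}"
    by (simp add: count_image_mset_eq_card_vimage zkey_eq_iff)
  also have "\<dots> = count (target_mset (block_sizes n m f)) v"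
  proof (cases "zkey v < 2 * m + 1")
    case False
    then have "{x \<in> {1..n}. zkey (f x) = zkey v} = {}"
      using bound by (metis (mono_tags, lifting) empty_Collect_eq)
    then show ?thesis
      using False by (simp add: count_target_mset)
  qed (simp add: count_target_mset nth_block_sizes)
  finally show "count (target_mset (block_sizes n m f)) v = count (image_mset f (mset_set {1..n})) v" ..
qed

lemma PP_set_antichain_iff:
  "f \<in> PP_set n antichain m \<longleftrightarrow> f \<in> {1..n} \<rightarrow>\<^sub>E UNIV \<and> (\<forall>x\<in>{1..n}. \<bar>f x\<bar> \<le> int m)"
  unfolding PP_set_def is_P_partition_def antichain_def by simp

lemma in_block_sort_rank:
  assumes bound: "\<forall>y\<in>{1..n}. \<bar>f y\<bar> \<le> int m" and x: "x \<in> {1..n}"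
  shows "in_block (block_sizes n m f) (zkey (f x)) (sort_rank n f x)"
proof -
  define k where "k = zkey (f x)"
  have k: "k < 2 * m + 1"
    using bound x zkey_less_iff_abs_le unfolding k_def by blast
  let ?below = "{y \<in> {1..n}. zkey (f y) < k}" and ?upto = "{y \<in> {1..n}. zkey (f y) < Suc k}"
    and ?before = "{y \<in> {1..n}. sort_less f y x}"
  have "{y \<in> {1..n}. sort_key n f y < sort_key n f x} = ?before"
    using sort_key_less_iff[OF _ x] by blast
  then have rank: "sort_rank n f x = card ?before + 1"
    using x unfolding rank_perm_def by simp
  have "?below \<subseteq> ?before"
    unfolding sort_less_def zless_def k_def by auto
  then have lower: "card ?below \<le> card ?before"
    by (intro card_mono) auto
  have "?before \<subseteq> ?upto - {x}"
    unfolding sort_less_def zless_def k_def by auto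
  then have "card ?before \<le> card (?upto - {x})"
    by (intro card_mono) auto
  also have "\<dots> < card ?upto"
    using x by (intro card_Diff1_less) (auto simp: k_def)
  finally have upper: "card ?before < card ?upto" .
  show ?thesis
    using prefix_sum_block_sizes[of k m n f] prefix_sum_block_sizes[of "Suc k" m n f] k rank lower upper
    unfolding in_block_def k_def by simp
qed

lemma sort_rank_in_lin_ext:
  assumes bound: "\<forall>y\<in>{1..n}. \<bar>f y\<bar> \<le> int m"
  shows "sort_rank n f \<in> lin_ext n (P_A (block_sizes n m f))"
proof -
  let ?A = "block_sizes n m f" and ?r = "sort_rank n f"
  have "inv ?r p < inv ?r q" if pq: "p \<in> {1..n}" "q \<in> {1..n}" "P_A ?A p q" for p q
  proof -
    define x y where "x = inv ?r p" and "y = inv ?r q"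
    have xy: "x \<in> {1..n}" "y \<in> {1..n}" "?r x = p" "?r y = q"
      using pq permutes_inverses(1)[OF sort_rank_permutes] permutes_in_image[OF permutes_inv[OF sort_rank_permutes]]
      unfolding x_def y_def by auto
    obtain k where k: "k < length ?A" "in_block ?A k p" "in_block ?A k q" "if even k then p < q else q < p"
      using pq(3) unfolding P_A_def by blast
    have "zkey (f x) = k" "zkey (f y) = k"
      using in_block_unique in_block_sort_rank[OF bound] xy k by metis+
    then have "f x = f y" "even k \<longleftrightarrow> f x \<ge> 0"
      using zkey_eq_iff even_zkey_iff by metis+
    then show "x < y"
      using k(4) sort_rank_less_iff[OF xy(1,2), of f] sort_rank_less_iff[OF xy(2,1), of f] xy(3,4)
      unfolding sort_less_def by (auto split: if_splits)
  qed
  then show ?thesis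
    unfolding lin_ext_def chain_less_def using sort_rank_permutes by blast
qed

lemma sort_rank_in_updown_outcomes:
  assumes "f \<in> PP_set n antichain m"
  shows "(block_sizes n m f, sort_rank n f) \<in> updown_outcomes n m"
  using assms sum_list_block_sizes sort_rank_in_lin_ext
  unfolding PP_set_antichain_iff updown_outcomes_def wcomps_def by simp

text \<open>The value \<open>undefined\<close> off \<open>{1..n}\<close> matches the extensional functions of \<open>PP_set\<close>.\<close>
definition partition_of_outcome :: "nat \<Rightarrow> nat list \<Rightarrow> (nat \<Rightarrow> nat) \<Rightarrow> nat \<Rightarrow> int" where
  "partition_of_outcome n A \<sigma> x = (if x \<in> {1..n} then block_val (block_of A (\<sigma> x)) else undefined)"

lemma partition_of_outcome_sort_rank:
  assumes "f \<in> PP_set n antichain m"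
  shows "partition_of_outcome n (block_sizes n m f) (sort_rank n f) = f"
proof
  fix x
  have f: "f \<in> {1..n} \<rightarrow>\<^sub>E UNIV" and bound: "\<forall>y\<in>{1..n}. \<bar>f y\<bar> \<le> int m"
    using assms unfolding PP_set_antichain_iff by blast+
  show "partition_of_outcome n (block_sizes n m f) (sort_rank n f) x = f x"
  proof (cases "x \<in> {1..n}")
    case True
    have "zkey (f x) < length (block_sizes n m f)"
      using bound True zkey_less_iff_abs_le[of "f x" m] by simp
    then have "block_of (block_sizes n m f) (sort_rank n f x) = zkey (f x)"
      by (rule block_of_eq[OF _ in_block_sort_rank[OF bound True]])
    then show ?thesis
      using True unfolding partition_of_outcome_def by simp
  next
    case False
    show ?thesis
      unfolding partition_of_outcome_def if_not_P[OF False] by (rule PiE_arb[OF f False, symmetric])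
  qed
qed

lemma updown_outcomesD:
  assumes "(A, \<sigma>) \<in> updown_outcomes n m"
  shows "length A = 2 * m + 1" "sum_list A = n" "\<sigma> \<in> lin_ext n (P_A A)" "\<sigma> permutes {1..n}"
  using assms unfolding updown_outcomes_def wcomps_def lin_ext_def by auto

lemma lin_ext_P_A_within_block:
  assumes "\<sigma> \<in> lin_ext n (P_A A)" "i \<in> {1..n}" "j \<in> {1..n}"
    and "k < length A" "in_block A k (\<sigma> i)" "in_block A k (\<sigma> j)"
    and order: "if even k then i < j else j < i"
  shows "\<sigma> i < \<sigma> j"
proof (rule ccontr)
  have \<sigma>: "\<sigma> permutes {1..n}"
    and ext: "\<And>p q. p \<in> {1..n} \<Longrightarrow> q \<in> {1..n} \<Longrightarrow> P_A A p q \<Longrightarrow> inv \<sigma> p < inv \<sigma> q"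
    using assms(1) unfolding lin_ext_def chain_less_def by auto
  assume "\<not> \<sigma> i < \<sigma> j"
  moreover have "i \<noteq> j"
    using order by (auto split: if_splits)
  then have "\<sigma> i \<noteq> \<sigma> j"
    using permutes_inj[OF \<sigma>] by (metis injD)
  ultimately have less: "\<sigma> j < \<sigma> i"
    by simp
  have image: "\<sigma> i \<in> {1..n}" "\<sigma> j \<in> {1..n}"
    using permutes_in_image[OF \<sigma>] assms(2,3) by auto
  show False
  proof (cases "even k")
    case True
    then have "P_A A (\<sigma> j) (\<sigma> i)"
      using less assms(4-6) unfolding P_A_def by auto
    then have "inv \<sigma> (\<sigma> j) < inv \<sigma> (\<sigma> i)"
      using ext image by blast
    then show False
      using order True by (simp add: permutes_inverses(2)[OF \<sigma>])
  next
    case False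
    then have "P_A A (\<sigma> i) (\<sigma> j)"
      using less assms(4-6) unfolding P_A_def by auto
    then have "inv \<sigma> (\<sigma> i) < inv \<sigma> (\<sigma> j)"
      using ext image by blast
    then show False
      using order False by (simp add: permutes_inverses(2)[OF \<sigma>])
  qed
qed

lemma in_block_block_of_outcome:
  assumes "(A, \<sigma>) \<in> updown_outcomes n m" "x \<in> {1..n}"
  shows "block_of A (\<sigma> x) < length A" "in_block A (block_of A (\<sigma> x)) (\<sigma> x)"
  using block_of_in_block[of "\<sigma> x" A] updown_outcomesD(2)[OF assms(1)]
    permutes_in_image[OF updown_outcomesD(4)[OF assms(1)]] assms(2) by auto

lemma zkey_partition_of_outcome:
  "x \<in> {1..n} \<Longrightarrow> zkey (partition_of_outcome n A \<sigma> x) = block_of A (\<sigma> x)"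
  by (simp add: partition_of_outcome_def)

lemma partition_of_outcome_in_PP_set:
  assumes "(A, \<sigma>) \<in> updown_outcomes n m"
  shows "partition_of_outcome n A \<sigma> \<in> PP_set n antichain m"
  unfolding PP_set_antichain_iff
proof
  show "partition_of_outcome n A \<sigma> \<in> {1..n} \<rightarrow>\<^sub>E UNIV"
    unfolding PiE_iff extensional_def partition_of_outcome_def by simp
  show "\<forall>x\<in>{1..n}. \<bar>partition_of_outcome n A \<sigma> x\<bar> \<le> int m"
    using in_block_block_of_outcome(1)[OF assms] updown_outcomesD(1)[OF assms]
      zkey_partition_of_outcome zkey_less_iff_abs_le by metis
qed

lemma block_sizes_partition_of_outcome:
  assumes "(A, \<sigma>) \<in> updown_outcomes n m"
  shows "block_sizes n m (partition_of_outcome n A \<sigma>) = A"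
proof (rule nth_equalityI)
  note len = updown_outcomesD(1)[OF assms]
  show "length (block_sizes n m (partition_of_outcome n A \<sigma>)) = length A"
    using len by simp
  fix k assume "k < length (block_sizes n m (partition_of_outcome n A \<sigma>))"
  then have k: "k < length A"
    using len by simp
  have "{x \<in> {1..n}. zkey (partition_of_outcome n A \<sigma> x) = k} = {x \<in> {1..n}. block_of A (\<sigma> x) = k}"
    by (intro Collect_cong conj_cong refl) (simp add: zkey_partition_of_outcome)
  then have "block_sizes n m (partition_of_outcome n A \<sigma>) ! k = card {x \<in> {1..n}. block_of A (\<sigma> x) = k}"
    using k len by (simp add: nth_block_sizes)
  also have "\<dots> = card {p \<in> {1..n}. block_of A p = k}"
    by (rule card_Collect_permutes[OF updown_outcomesD(4)[OF assms]])
  also have "{p \<in> {1..n}. block_of A p = k} = {p \<in> {1..sum_list A}. in_block A k p}"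
    using block_of_in_block[of _ A] block_of_eq[OF k] updown_outcomesD(2)[OF assms] by auto
  also have "card \<dots> = A ! k"
    by (rule card_in_block[OF k])
  finally show "block_sizes n m (partition_of_outcome n A \<sigma>) ! k = A ! k" .
qed

lemma sort_rank_partition_of_outcome:
  assumes "(A, \<sigma>) \<in> updown_outcomes n m"
  shows "sort_rank n (partition_of_outcome n A \<sigma>) = \<sigma>"
proof -
  let ?f = "partition_of_outcome n A \<sigma>"
  have "\<sigma> i < \<sigma> j" if ij: "i \<in> {1..n}" "j \<in> {1..n}" "sort_less ?f i j" for i j
  proof -
    have "zkey (?f i) < zkey (?f j) \<or> (zkey (?f i) = zkey (?f j) \<and> (if even (zkey (?f i)) then i < j else j < i))"
      using ij(3) unfolding sort_less_def zless_def even_zkey_iff by auto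
    then consider "block_of A (\<sigma> i) < block_of A (\<sigma> j)"
      | "block_of A (\<sigma> i) = block_of A (\<sigma> j)" "if even (block_of A (\<sigma> i)) then i < j else j < i"
      using zkey_partition_of_outcome ij(1,2) by metis
    then show ?thesis
    proof cases
      case 1
      then show ?thesis
        using in_block_less in_block_block_of_outcome(2)[OF assms] ij(1,2) by blast
    next
      case 2
      then show ?thesis
        using lin_ext_P_A_within_block[OF updown_outcomesD(3)[OF assms] ij(1,2)]
          in_block_block_of_outcome[OF assms] ij(1,2) by metis
    qed
  qed
  then show ?thesis
    using updown_outcomesD(4)[OF assms] sort_key_less_iff
    by (intro rank_perm_unique[OF inj_on_sort_key, symmetric]) auto
qed

lemma image_of_outcome_iff:
  assumes "length A = 2 * m + 1" "\<sigma> permutes {1..n}"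
  shows "image_of_outcome n m A \<sigma> f \<longleftrightarrow>
    f \<in> PP_set n antichain m \<and> A = block_sizes n m f \<and> \<sigma> = sort_rank n f"
proof -
  have "image_mset f (mset_set {1..n}) = target_mset A \<longleftrightarrow> A = block_sizes n m f"
    if "f \<in> PP_set n antichain m"
    using that assms(1) target_mset_block_sizes target_mset_eq_iff[of "block_sizes n m f" A]
    unfolding PP_set_antichain_iff by auto
  then show ?thesis
    unfolding image_of_outcome_def sorting_perm_eq_inv_iff[OF assms(2)] by blast
qed

lemma image_of_outcome_iff_eq_partition_of_outcome:
  assumes "(A, \<sigma>) \<in> updown_outcomes n m"
  shows "image_of_outcome n m A \<sigma> f \<longleftrightarrow> f = partition_of_outcome n A \<sigma>"
  using image_of_outcome_iff[OF updown_outcomesD(1,4)[OF assms]] partition_of_outcome_sort_rank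
    partition_of_outcome_in_PP_set[OF assms] block_sizes_partition_of_outcome[OF assms]
    sort_rank_partition_of_outcome[OF assms]
  by metis

theorem proposition2p7:
  fixes n m :: nat
  assumes "n \<ge> 1" and "m \<ge> 1"
  shows "(\<forall>(A, \<sigma>) \<in> updown_outcomes n m. \<exists>!f. image_of_outcome n m A \<sigma> f)
       \<and> bij_betw (updown_map n m) (updown_outcomes n m) (PP_set n antichain m)"
proof
  show "\<forall>(A, \<sigma>) \<in> updown_outcomes n m. \<exists>!f. image_of_outcome n m A \<sigma> f"
    using image_of_outcome_iff_eq_partition_of_outcome by auto
  have updown_map: "updown_map n m (A, \<sigma>) = partition_of_outcome n A \<sigma>"
    if "(A, \<sigma>) \<in> updown_outcomes n m" for A \<sigma>
    unfolding updown_map_def prod.case image_of_outcome_iff_eq_partition_of_outcome[OF that] by simp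
  show "bij_betw (updown_map n m) (updown_outcomes n m) (PP_set n antichain m)"
  proof (rule bij_betw_byWitness[where f' = "\<lambda>f. (block_sizes n m f, sort_rank n f)"])
    show "\<forall>p \<in> updown_outcomes n m. (block_sizes n m (updown_map n m p), sort_rank n (updown_map n m p)) = p"
      using updown_map block_sizes_partition_of_outcome sort_rank_partition_of_outcome by auto
    show "\<forall>f \<in> PP_set n antichain m. updown_map n m (block_sizes n m f, sort_rank n f) = f"
      using updown_map sort_rank_in_updown_outcomes partition_of_outcome_sort_rank by auto
    show "updown_map n m ` updown_outcomes n m \<subseteq> PP_set n antichain m"
      using updown_map partition_of_outcome_in_PP_set by auto
    show "(\<lambda>f. (block_sizes n m f, sort_rank n f)) ` PP_set n antichain m \<subseteq> updown_outcomes n m"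
      using sort_rank_in_updown_outcomes by auto
  qed
qed

end
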